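(* Let $N\in\mathbb N$, let $T$ be an $N$-valid tree, and let $\tilde T$ and $\Gamma$ be the tree and digraph constructed from $T$ as described in the context. Let $m_0$ be a mask whose values $\lambda_{\mathbf c_1,\dots,\mathbf c_{N+1}}$ are compatible with $T$, and let $A^{(0)}=(a^{(0)}_{\mathbf i_1,\dots,\mathbf i_N})$ be the array $$a^{(0)}_{\mathbf i_1,\mathbf i_2,\dots,\mathbf i_N}=\lambda_{\mathbf i_1,\mathbf i_2,\dots,\mathbf i_N,\mathbf 0}\,\lambda_{\mathbf i_2,\dots,\mathbf i_N,\mathbf 0,\mathbf 0}\cdots\lambda_{\mathbf i_N,\mathbf 0,\dots,\mathbf 0}.$$ Then for every vertex $(\mathbf i_1,\dots,\mathbf i_N)$ of $\tilde T$ of level $l\le N$ one has $a^{(0)}_{\mathbf i_1,\dots,\mathbf i_N}=1$.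
   Context: Let $p$ be a prime, $s\in\mathbb N$, and $GF(p^s)$ the field with $p^s$ elements; each $\mathbf u\in GF(p^s)$ is identified with a vector $(u^{(0)},\dots,u^{(s-1)})\in\{0,\dots,p-1\}^s$ via a fixed basis over $GF(p)$, and $\mathbf 0$ denotes the zero element. The local field $F^{(s)}$ of characteristic $p$ is the field of formal Laurent series $\sum_{j\ge k}\mathbf x_j t^j$, $\mathbf x_j\in GF(p^s)$, identified with two-sided sequences $x=(\mathbf x_j)_{j\in\mathbb Z}$ having only finitely many nonzero $\mathbf x_j$ with $j<0$. For $\mathbf a\in GF(p^s)$ and $k\in\mathbb Z$, $\mathbf a g_k$ denotes the sequence with entry $\mathbf a$ at position $k$ and $\mathbf 0$ elsewhere. The dilation is $\mathcal A(\sum_n \mathbf x_n g_n)=\sum_n\mathbf x_n g_{n-1}$. For $\mathbf u\in GF(p^s)$, $k\in\mathbb Z$, the Rademacher character is $\mathbf r_k^{\mathbf u}(x)=\exp\big(\tfrac{2\pi i}{p}\sum_{l=0}^{s-1}u^{(l)}x_k^{(l)}\big)$. Every continuous character of the additive group of $F^{(s)}$ is uniquely $\chi=\prod_{k\in\mathbb Z}\mathbf r_k^{\mathbf b_k}$ with $\mathbf b_k=\mathbf 0$ for all sufficiently large $k$; write $(\chi,x)=\chi(x)$ and let $\chi\mathcal A^{j}$ be the character $x\mapsto\chi(\mathcal A^{j}x)$. For $\mathbf a_{-N},\dots,\mathbf a_0\in GF(p^s)$ let $C(\mathbf a_{-N},\dots,\mathbf a_0)$ be the set of characters $\prod_k\mathbf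 r_k^{\mathbf b_k}$ with $\mathbf b_k=\mathbf a_k$ for $-N\le k\le 0$ and $\mathbf b_k=\mathbf 0$ for $k\ge1$ (the coset $(F^{(s)}_{-N})^\perp\mathbf r_{-N}^{\mathbf a_{-N}}\cdots\mathbf r_0^{\mathbf a_0}$). Mask: let $H_0^{(N+1)}=\{\mathbf a_{-1}g_{-1}\dot+\cdots\dot+\mathbf a_{-(N+1)}g_{-(N+1)}:\mathbf a_i\in GF(p^s)\}$. A mask is a function $m_0(\chi)=\frac1p\sum_{h\in H_0^{(N+1)}}\beta_h\overline{(\chi\mathcal A^{-1},h)}$ with $\beta_h\in\mathbb C$; it is constant on each set $C(\mathbf a_{-N},\dots,\mathbf a_0)$, and we put $\lambda_{\mathbf a_{-N},\dots,\mathbf a_0}=|m_0(\chi)|^2$ for $\chi\in C(\mathbf a_{-N},\dots,\mathbf a_0)$ (an array indexed by $GF(p^s)^{N+1}$). Trees: consider a finite rooted tree $T$ whose vertices carry labels, with arcs directed from each non-root vertex to its parent; the level of a vertex is its distance to the root. $T$ is $N$-valid if (1) every label is an element of $GF(p^s)$; (2) the root and all vertices of levels $1,\dots,N-1$ have label $\mathbf 0$; (3) for every $(\mathbf c_1,\dots,\mathbf c_N)\in GF(p^s)^N$ there is exactly one directed path $v_1\to v_2\to\cdots\to v_N$ in $T$ ($v_{i+1}$ the parent of $v_i$) whose labels are $\mathbf c_1,\dots,\mathbf c_N$. The tree $\tilde T$ has as vertices the label tuples $(\mathbf c_1,\dots,\mathbf c_N)$ of such paths, with an arc from the tuple of the path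 starting at $v$ to the tuple of the path starting at the parent of $v$; its root is $(\mathbf 0,\dots,\mathbf 0)$ and the level of a tuple in $\tilde T$ equals (level of $v_1$ in $T$) $-(N-1)$. The digraph $\Gamma$ has the same vertices; for a vertex $B=(\mathbf b_1,\dots,\mathbf b_N)$ its successor set is $D(B)=\{\mathbf d\in GF(p^s): (\mathbf b_2,\dots,\mathbf b_N,\mathbf d)$ is a vertex of $\tilde T$ of level strictly less than the level of $B\}$, and $B$ is connected in $\Gamma$ to each $(\mathbf b_2,\dots,\mathbf b_N,\mathbf d)$, $\mathbf d\in D(B)$. The values $\lambda$ are compatible with $T$ if: $\lambda_{\mathbf 0,\dots,\mathbf 0}=1$ and $\lambda_{\mathbf 0,\dots,\mathbf 0,\mathbf d}=0$ for $\mathbf d\ne\mathbf 0$; and for every vertex $B=(\mathbf b_1,\dots,\mathbf b_N)\ne(\mathbf 0,\dots,\mathbf 0)$ of $\tilde T$, $\sum_{\mathbf d\in D(B)}\lambda_{\mathbf b_1,\dots,\mathbf b_N,\mathbf d}=1$ and $\lambda_{\mathbf b_1,\dots,\mathbf b_N,\mathbf d}=0$ for $\mathbf d\notin D(B)$. The component $a_{\mathbf i_1,\dots,\mathbf i_N}$ of an $N$-dimensional array is said to correspond to the vertex $(\mathbf i_1,\dots,\mathbf i_N)$. *)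

theory Defs
  imports Complex_Main "HOL-Computational_Algebra.Primes"
begin

text \<open>An element u of GF(p^s) is identified with its coordinate vector
(u^(0),...,u^(s-1)) in {0..p-1}^s; we represent it as a function
nat => nat vanishing from index s on.  Only the additive structure and the
coordinates are used in the statement.\<close>

definition gf :: "nat \<Rightarrow> nat \<Rightarrow> (nat \<Rightarrow> nat) set" where
  "gf p s = {u. (\<forall>l<s. u l < p) \<and> (\<forall>l\<ge>s. u l = 0)}"

definition gzero :: "nat \<Rightarrow> nat" where
  "gzero = (\<lambda>_. 0)"

definition local_field :: "nat \<Rightarrow> nat \<Rightarrow> (int \<Rightarrow> nat \<Rightarrow> nat) set" where
  "local_field p s = {x. (\<forall>k. x k \<in> gf p s) \<and> finite {k. k < 0 \<and> x k \<noteq> gzero}}"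

text \<open>Value of the character prod_k r_k^(b_k) at x (only finitely many factors
differ from 1).\<close>
definition char_val :: "nat \<Rightarrow> nat \<Rightarrow> (int \<Rightarrow> nat \<Rightarrow> nat) \<Rightarrow> (int \<Rightarrow> nat \<Rightarrow> nat) \<Rightarrow> complex" where
  "char_val p s b x =
     cis (2 * pi / real p *
          real (\<Sum>k\<in>{k. b k \<noteq> gzero \<and> x k \<noteq> gzero}. \<Sum>l<s. b k l * x k l))"

text \<open>Inverse dilation: A(sum x_n g_n) = sum x_n g_(n-1), hence (A^-1 x)_k = x_(k-1).\<close>
definition dil_inv :: "(int \<Rightarrow> nat \<Rightarrow> nat) \<Rightarrow> (int \<Rightarrow> nat \<Rightarrow> nat)" where
  "dil_inv x = (\<lambda>k. x (k - 1))"

text \<open>H_0^(N+1): elements a_-1 g_-1 + ... + a_-(N+1) g_-(N+1).\<close>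
definition H0 :: "nat \<Rightarrow> nat \<Rightarrow> nat \<Rightarrow> (int \<Rightarrow> nat \<Rightarrow> nat) set" where
  "H0 p s N = {h. (\<forall>k. h k \<in> gf p s) \<and>
                  (\<forall>k. (k < - (int N + 1) \<or> k > -1) \<longrightarrow> h k = gzero)}"

text \<open>The mask m_0(chi) = 1/p sum_h beta_h conj((chi A^-1, h)), chi given by its
digit sequence b.\<close>
definition mask_m0 ::
  "nat \<Rightarrow> nat \<Rightarrow> nat \<Rightarrow> ((int \<Rightarrow> nat \<Rightarrow> nat) \<Rightarrow> complex) \<Rightarrow> (int \<Rightarrow> nat \<Rightarrow> nat) \<Rightarrow> complex" where
  "mask_m0 p s N \<beta> b =
     (1 / of_nat p) * (\<Sum>h\<in>H0 p s N. \<beta> h * cnj (char_val p s b (dil_inv h)))"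

text \<open>The set C(a_-N,...,a_0) of characters (as digit sequences); the list c
is [a_-N, ..., a_0].\<close>
definition coset_C :: "nat \<Rightarrow> nat \<Rightarrow> nat \<Rightarrow> (nat \<Rightarrow> nat) list \<Rightarrow> (int \<Rightarrow> nat \<Rightarrow> nat) set" where
  "coset_C p s N c = {b. (\<forall>k. b k \<in> gf p s) \<and>
                         (\<forall>k. - int N \<le> k \<and> k \<le> 0 \<longrightarrow> b k = c ! nat (k + int N)) \<and>
                         (\<forall>k\<ge>1. b k = gzero)}"

definition is_mask_lambda :: "nat \<Rightarrow> nat \<Rightarrow> nat \<Rightarrow> ((nat \<Rightarrow> nat) list \<Rightarrow> real) \<Rightarrow> bool" where
  "is_mask_lambda p s N lam \<longleftrightarrow>
     (\<exists>\<beta>. \<forall>c. set c \<subseteq> gf p s \<and> length c = N + 1 \<longrightarrow>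
            (\<forall>b\<in>coset_C p s N c. lam c = (cmod (mask_m0 p s N \<beta> b))\<^sup>2))"

text \<open>Finite rooted tree on vertex set V with root r; every non-root vertex v
has the arc v -> par v.\<close>
definition rooted_tree :: "'v set \<Rightarrow> 'v \<Rightarrow> ('v \<Rightarrow> 'v) \<Rightarrow> bool" where
  "rooted_tree V r par \<longleftrightarrow> finite V \<and> r \<in> V \<and> (\<forall>v\<in>V - {r}. par v \<in> V) \<and>
                          (\<forall>v\<in>V. \<exists>n. (par ^^ n) v = r)"

definition level :: "('v \<Rightarrow> 'v) \<Rightarrow> 'v \<Rightarrow> 'v \<Rightarrow> nat" where
  "level par r v = (LEAST n. (par ^^ n) v = r)"

definition path_labels :: "('v \<Rightarrow> 'v) \<Rightarrow> ('v \<Rightarrow> nat \<Rightarrow> nat) \<Rightarrow> nat \<Rightarrow> 'v \<Rightarrow> (nat \<Rightarrow> nat) list" where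
  "path_labels par lab N v = map (\<lambda>i. lab ((par ^^ i) v)) [0..<N]"

text \<open>A directed path of N vertices starting at v exists iff v is in V and
has level at least N-1.\<close>
definition path_start :: "'v set \<Rightarrow> 'v \<Rightarrow> ('v \<Rightarrow> 'v) \<Rightarrow> nat \<Rightarrow> 'v \<Rightarrow> bool" where
  "path_start V r par N v \<longleftrightarrow> v \<in> V \<and> N - 1 \<le> level par r v"

definition valid_tree ::
  "nat \<Rightarrow> nat \<Rightarrow> nat \<Rightarrow> 'v set \<Rightarrow> 'v \<Rightarrow> ('v \<Rightarrow> 'v) \<Rightarrow> ('v \<Rightarrow> nat \<Rightarrow> nat) \<Rightarrow> bool" where
  "valid_tree p s N V r par lab \<longleftrightarrow>
     rooted_tree V r par \<and>
     (\<forall>v\<in>V. lab v \<in> gf p s) \<and>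
     (\<forall>v\<in>V. level par r v \<le> N - 1 \<longrightarrow> lab v = gzero) \<and>
     (\<forall>c. set c \<subseteq> gf p s \<and> length c = N \<longrightarrow>
          (\<exists>!v. path_start V r par N v \<and> path_labels par lab N v = c))"

definition tt_level ::
  "'v set \<Rightarrow> 'v \<Rightarrow> ('v \<Rightarrow> 'v) \<Rightarrow> ('v \<Rightarrow> nat \<Rightarrow> nat) \<Rightarrow> nat \<Rightarrow> (nat \<Rightarrow> nat) list \<Rightarrow> nat" where
  "tt_level V r par lab N c =
     level par r (THE v. path_start V r par N v \<and> path_labels par lab N v = c) - (N - 1)"

definition succ_D ::
  "nat \<Rightarrow> nat \<Rightarrow> 'v set \<Rightarrow> 'v \<Rightarrow> ('v \<Rightarrow> 'v) \<Rightarrow> ('v \<Rightarrow> nat \<Rightarrow> nat) \<Rightarrow> nat \<Rightarrow>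
     (nat \<Rightarrow> nat) list \<Rightarrow> (nat \<Rightarrow> nat) set" where
  "succ_D p s V r par lab N B =
     {d \<in> gf p s. tt_level V r par lab N (tl B @ [d]) < tt_level V r par lab N B}"

definition compatible ::
  "nat \<Rightarrow> nat \<Rightarrow> 'v set \<Rightarrow> 'v \<Rightarrow> ('v \<Rightarrow> 'v) \<Rightarrow> ('v \<Rightarrow> nat \<Rightarrow> nat) \<Rightarrow> nat \<Rightarrow>
     ((nat \<Rightarrow> nat) list \<Rightarrow> real) \<Rightarrow> bool" where
  "compatible p s V r par lab N lam \<longleftrightarrow>
     lam (replicate (N + 1) gzero) = 1 \<and>
     (\<forall>d\<in>gf p s - {gzero}. lam (replicate N gzero @ [d]) = 0) \<and>
     (\<forall>B. set B \<subseteq> gf p s \<and> length B = N \<and> B \<noteq> replicate N gzero \<longrightarrow>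
          (\<Sum>d\<in>succ_D p s V r par lab N B. lam (B @ [d])) = 1 \<and>
          (\<forall>d\<in>gf p s - succ_D p s V r par lab N B. lam (B @ [d]) = 0))"

definition array_a0 :: "nat \<Rightarrow> ((nat \<Rightarrow> nat) list \<Rightarrow> real) \<Rightarrow> (nat \<Rightarrow> nat) list \<Rightarrow> real" where
  "array_a0 N lam i = (\<Prod>k\<in>{1..N}. lam (drop (k - 1) i @ replicate k gzero))"

end

theory Submission
  imports Defs
begin

text \<open>For a vertex B of the tree T-tilde other than the root, the path starting at its
vertex v in T has v of level between N and 2N - 1.  Hence the path starting at the
parent of v has labels tl B followed by the label of a vertex of level at most N - 1,
i.e. by 0; and every successor B' = tl B @ [d] of lower level starts at a vertex of
level at most 2N - 2, so again d is the label of a vertex of level at most N - 1 and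
d = 0.  Thus D(B) = {0}, compatibility forces lambda_{B,0} = 1, and the shifts
(i_k, ..., i_N, 0, ..., 0) of a vertex of level at most N stay vertices of level at
most N, so every factor of a^(0) equals 1.\<close>

lemma level_root: "level par r r = 0"
  unfolding level_def by (rule Least_eq_0) simp

lemma level_le: "(par ^^ n) v = r \<Longrightarrow> level par r v \<le> n"
  unfolding level_def by (rule Least_le)

lemma funpow_level_eq_root:
  assumes "rooted_tree V r par" "v \<in> V"
  shows "(par ^^ level par r v) v = r"
proof -
  have "\<exists>n. (par ^^ n) v = r" using assms unfolding rooted_tree_def by blast
  thus ?thesis unfolding level_def by (rule LeastI_ex)
qed

lemma level_parent:
  assumes T: "rooted_tree V r par" and v: "v \<in> V" "v \<noteq> r"
  shows "par v \<in> V" and "level par r (par v) = level par r v - 1" and "level par r v \<ge> 1"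
proof -
  show pv: "par v \<in> V" using T v unfolding rooted_tree_def by auto
  have "level par r v \<noteq> 0"
    using funpow_level_eq_root[OF T v(1)] v(2) by (metis funpow_0)
  then obtain m where m: "level par r v = Suc m" by (cases "level par r v") auto
  have "(par ^^ m) (par v) = r"
    using funpow_level_eq_root[OF T v(1)] m by (simp add: funpow_Suc_right del: funpow.simps)
  hence "level par r (par v) \<le> m" by (rule level_le)
  moreover have "(par ^^ Suc (level par r (par v))) v = r"
    using funpow_level_eq_root[OF T pv] by (simp add: funpow_Suc_right del: funpow.simps)
  hence "level par r v \<le> Suc (level par r (par v))" by (rule level_le)
  ultimately show "level par r (par v) = level par r v - 1" and "level par r v \<ge> 1"
    using m by auto
qed

lemma level_funpow:
  assumes T: "rooted_tree V r par" and v: "v \<in> V" and i: "i \<le> level par r v"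
  shows "(par ^^ i) v \<in> V \<and> level par r ((par ^^ i) v) = level par r v - i"
  using i
proof (induction i)
  case 0
  thus ?case using v by simp
next
  case (Suc i)
  hence IH: "(par ^^ i) v \<in> V" "level par r ((par ^^ i) v) = level par r v - i" by auto
  have "(par ^^ i) v \<noteq> r" using IH(2) Suc.prems level_root[of par r] by auto
  thus ?case using level_parent[OF T IH(1)] IH by simp
qed

lemma path_labels_Suc:
  "path_labels par lab (Suc n) v = lab v # map (\<lambda>i. lab ((par ^^ Suc i) v)) [0..<n]"
  unfolding path_labels_def by (simp add: map_upt_Suc del: upt_Suc)

lemma path_labels_parent:
  "path_labels par lab (Suc n) (par v) =
     tl (path_labels par lab (Suc n) v) @ [lab ((par ^^ Suc n) v)]"
proof -
  have "path_labels par lab (Suc n) (par v) = map (\<lambda>i. lab ((par ^^ Suc i) v)) [0..<Suc n]"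
    unfolding path_labels_def by (simp add: funpow_Suc_right del: funpow.simps)
  thus ?thesis by (simp add: path_labels_Suc)
qed

lemma last_path_labels:
  "0 < N \<Longrightarrow> last (path_labels par lab N v) = lab ((par ^^ (N - 1)) v)"
  unfolding path_labels_def by (cases N) simp_all

lemma set_tl_subset: "set (tl xs) \<subseteq> set xs"
  by (cases xs) auto

lemma gzero_gf: "0 < p \<Longrightarrow> gzero \<in> gf p s"
  unfolding gf_def gzero_def by auto

definition tt_vertex ::
  "'v set \<Rightarrow> 'v \<Rightarrow> ('v \<Rightarrow> 'v) \<Rightarrow> ('v \<Rightarrow> nat \<Rightarrow> nat) \<Rightarrow> nat \<Rightarrow> (nat \<Rightarrow> nat) list \<Rightarrow> 'v" where
  "tt_vertex V r par lab N c = (THE v. path_start V r par N v \<and> path_labels par lab N v = c)"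

lemma tt_level_tt_vertex:
  "tt_level V r par lab N c = level par r (tt_vertex V r par lab N c) - (N - 1)"
  unfolding tt_level_def tt_vertex_def ..

locale valid_labelled_tree =
  fixes p s N :: nat and V :: "'v set" and r :: 'v and par :: "'v \<Rightarrow> 'v"
    and lab :: "'v \<Rightarrow> nat \<Rightarrow> nat"
  assumes valid: "valid_tree p s N V r par lab" and p_pos: "0 < p" and N_pos: "1 \<le> N"
begin

abbreviation tuple :: "(nat \<Rightarrow> nat) list \<Rightarrow> bool" where
  "tuple c \<equiv> set c \<subseteq> gf p s \<and> length c = N"

abbreviation vertex :: "(nat \<Rightarrow> nat) list \<Rightarrow> 'v" where
  "vertex c \<equiv> tt_vertex V r par lab N c"

abbreviation tlevel :: "(nat \<Rightarrow> nat) list \<Rightarrow> nat" where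
  "tlevel c \<equiv> tt_level V r par lab N c"

lemma rooted: "rooted_tree V r par"
  using valid unfolding valid_tree_def by auto

lemma unique_path: "tuple c \<Longrightarrow> \<exists>!v. path_start V r par N v \<and> path_labels par lab N v = c"
  using valid unfolding valid_tree_def by auto

lemma vertex_path:
  assumes "tuple c"
  shows "vertex c \<in> V" "N - 1 \<le> level par r (vertex c)" "path_labels par lab N (vertex c) = c"
  using theI'[OF unique_path[OF assms]] unfolding tt_vertex_def path_start_def by auto

lemma vertex_eqI:
  assumes "tuple c" "v \<in> V" "N - 1 \<le> level par r v" "path_labels par lab N v = c"
  shows "vertex c = v"
  using the1_equality[OF unique_path[OF assms(1)]] assms(2-4)
  unfolding tt_vertex_def path_start_def by auto

lemma lab_ancestor_eq_gzero:
  assumes "v \<in> V" "i \<le> level par r v" "level par r v - i \<le> N - 1"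
  shows "lab ((par ^^ i) v) = gzero"
  using valid level_funpow[OF rooted assms(1,2)] assms(3) unfolding valid_tree_def by auto

text \<open>Only the root of T-tilde starts at a vertex of level N - 1, since all labels
below level N are 0.\<close>

lemma level_vertex_ge:
  assumes B: "tuple B" "B \<noteq> replicate N gzero"
  shows "N \<le> level par r (vertex B)"
proof (rule ccontr)
  assume "\<not> N \<le> level par r (vertex B)"
  hence lv: "level par r (vertex B) = N - 1" using vertex_path(2)[OF B(1)] by auto
  have "path_labels par lab N (vertex B) = map (\<lambda>i. gzero) [0..<N]"
    unfolding path_labels_def
    using lab_ancestor_eq_gzero[OF vertex_path(1)[OF B(1)]] lv by (intro map_cong) auto
  thus False using B(2) vertex_path(3)[OF B(1)] by (simp add: map_replicate_const)
qed

lemma vertex_shift: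
  assumes B: "tuple B" "B \<noteq> replicate N gzero" "tlevel B \<le> N"
  shows "tuple (tl B @ [gzero])" and "tlevel (tl B @ [gzero]) = tlevel B - 1"
    and "tlevel B \<ge> 1"
proof -
  let ?v = "vertex B"
  have vV: "?v \<in> V" using vertex_path(1)[OF B(1)] .
  have ge: "N \<le> level par r ?v" using level_vertex_ge[OF B(1,2)] .
  have le: "level par r ?v \<le> 2 * N - 1" using B(3) tt_level_tt_vertex[of V r par lab N B] by simp
  have vr: "?v \<noteq> r" using ge N_pos level_root[of par r] by auto
  note parent = level_parent[OF rooted vV vr]
  show tup: "tuple (tl B @ [gzero])"
    using B(1) N_pos gzero_gf[OF p_pos] set_tl_subset by fastforce
  obtain n where n: "N = Suc n" using N_pos by (cases N) auto
  have "lab ((par ^^ N) ?v) = gzero" using lab_ancestor_eq_gzero[OF vV ge] le by simp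
  hence "path_labels par lab N (par ?v) = tl B @ [gzero]"
    using path_labels_parent[of par lab n ?v] vertex_path(3)[OF B(1)] n by simp
  hence "vertex (tl B @ [gzero]) = par ?v"
    using vertex_eqI[OF tup] parent ge by simp
  thus "tlevel (tl B @ [gzero]) = tlevel B - 1" and "tlevel B \<ge> 1"
    using tt_level_tt_vertex[of V r par lab N] parent(2) ge N_pos by auto
qed

lemma succ_D_eq_gzero:
  assumes B: "tuple B" "B \<noteq> replicate N gzero" "tlevel B \<le> N"
  shows "succ_D p s V r par lab N B = {gzero}"
proof
  show "{gzero} \<subseteq> succ_D p s V r par lab N B"
    using vertex_shift[OF B] gzero_gf[OF p_pos] unfolding succ_D_def by simp
next
  show "succ_D p s V r par lab N B \<subseteq> {gzero}"
  proof
    fix d assume d: "d \<in> succ_D p s V r par lab N B"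
    let ?B' = "tl B @ [d]"
    have tup: "tuple ?B'"
      using d B(1) N_pos set_tl_subset unfolding succ_D_def by fastforce
    let ?u = "vertex ?B'"
    have "tlevel ?B' < tlevel B" using d unfolding succ_D_def by simp
    hence "level par r ?u - (N - 1) \<le> N - 1"
      using B(3) tt_level_tt_vertex[of V r par lab N] by simp
    hence "lab ((par ^^ (N - 1)) ?u) = gzero"
      using lab_ancestor_eq_gzero vertex_path(1,2)[OF tup] by simp
    moreover have "last (path_labels par lab N ?u) = d"
      using vertex_path(3)[OF tup] by simp
    ultimately show "d \<in> {gzero}" using last_path_labels[of N par lab ?u] N_pos by simp
  qed
qed

lemma compatible_append_gzero:
  assumes comp: "compatible p s V r par lab N lam" and B: "tuple B" "tlevel B \<le> N"
  shows "lam (B @ [gzero]) = 1"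
proof (cases "B = replicate N gzero")
  case True
  thus ?thesis using comp unfolding compatible_def by (simp add: replicate_append_same)
next
  case False
  have "(\<Sum>d\<in>succ_D p s V r par lab N B. lam (B @ [d])) = 1"
    using comp B False unfolding compatible_def by blast
  thus ?thesis using succ_D_eq_gzero[OF B(1) False B(2)] by simp
qed

lemma shifted_vertex_level_le:
  assumes i: "tuple i" "tlevel i \<le> N" and k: "k \<le> N"
  shows "tuple (drop k i @ replicate k gzero) \<and> tlevel (drop k i @ replicate k gzero) \<le> N"
  using k
proof (induction k)
  case 0
  thus ?case using i by simp
next
  case (Suc k)
  let ?B = "drop k i @ replicate k gzero"
  have IH: "tuple ?B" "tlevel ?B \<le> N" using Suc by auto
  have "tl ?B @ [gzero] = drop (Suc k) i @ replicate (Suc k) gzero"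
    using Suc.prems i(1) by (simp add: replicate_append_same drop_Suc tl_drop)
  moreover have "tuple (tl ?B @ [gzero]) \<and> tlevel (tl ?B @ [gzero]) \<le> N"
  proof (cases "?B = replicate N gzero")
    case True
    hence "tl ?B @ [gzero] = ?B" using N_pos by (cases N) (auto simp: replicate_append_same)
    thus ?thesis using IH by simp
  next
    case False
    thus ?thesis using vertex_shift[OF IH(1) False IH(2)] IH(2) by simp
  qed
  ultimately show ?case by simp
qed

end

theorem lemma4p1:
  fixes p s N :: nat and V :: "'v set" and r :: 'v and par :: "'v \<Rightarrow> 'v"
    and lab :: "'v \<Rightarrow> nat \<Rightarrow> nat" and lam :: "(nat \<Rightarrow> nat) list \<Rightarrow> real"
  assumes "prime p" and "s \<ge> 1" and "N \<ge> 1"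
    and "valid_tree p s N V r par lab"
    and "is_mask_lambda p s N lam"
    and "compatible p s V r par lab N lam"
  shows "\<forall>i. set i \<subseteq> gf p s \<and> length i = N \<and> tt_level V r par lab N i \<le> N
             \<longrightarrow> array_a0 N lam i = 1"
proof (intro allI impI)
  interpret valid_labelled_tree p s N V r par lab
    using assms(1,3,4) prime_gt_0_nat by unfold_locales auto
  fix i assume "set i \<subseteq> gf p s \<and> length i = N \<and> tlevel i \<le> N"
  hence i: "tuple i" "tlevel i \<le> N" by auto
  have "lam (drop (k - 1) i @ replicate k gzero) = 1" if k: "k \<in> {1..N}" for k
  proof -
    let ?B = "drop (k - 1) i @ replicate (k - 1) gzero"
    have "k - 1 \<le> N" using k by auto
    hence "tuple ?B" "tlevel ?B \<le> N" using shifted_vertex_level_le[OF i] by blast+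
    hence "lam (?B @ [gzero]) = 1" by (rule compatible_append_gzero[OF assms(6)])
    moreover have "?B @ [gzero] = drop (k - 1) i @ replicate k gzero"
      using k by (cases k) (auto simp: replicate_append_same)
    ultimately show ?thesis by simp
  qed
  thus "array_a0 N lam i = 1" unfolding array_a0_def by simp
qed

end
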